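(* Let $\sigma\in(\tfrac12,1)$ be fixed. There is a constant $B=B(\sigma)>0$ such that for every prime $p$ and every real $k>0$: (i) $\displaystyle\sum_{\nu\ge0}\frac{d_{k/2}(p^\nu)^2}{p^{2\nu\sigma}}=I_0\Big(\frac{k}{p^\sigma}\Big)\exp\Big\{E_1\Big\}$ with $|E_1|\le B\,k/p^{2\sigma}$; (ii) if moreover $p\le k^{1/\sigma}$, then $\displaystyle\sum_{\nu\ge0}\frac{d_{k/2}(p^\nu)^2}{p^{2\nu\sigma}}=\exp\{E_2\}$ with $|E_2|\le B\,k/p^{\sigma}$.
   Context: For real $z>0$, $d_z(n)$ is the generalized divisor function, defined by $\zeta(s)^z=\sum_{n\ge1}d_z(n)n^{-s}$ ($\Re s>1$); it is multiplicative with $d_z(p^\nu)=\frac{\Gamma(z+\nu)}{\Gamma(z)\,\nu!}$. $I_0(t):=\int_0^1\exp(t\cos(2\pi\theta))\,d\theta=\sum_{n\ge0}\frac{(t/2)^{2n}}{(n!)^2}$ is the modified Bessel function of order $0$. *)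

theory Defs
  imports "HOL-Analysis.Analysis" "HOL-Computational_Algebra.Primes"
begin

definition gen_divisor :: "real \<Rightarrow> nat \<Rightarrow> real" where
  "gen_divisor z n = (\<Prod>p\<in>prime_factors n.
      Gamma (z + real (multiplicity p n)) / (Gamma z * fact (multiplicity p n)))"

definition bessel_I0 :: "real \<Rightarrow> real" where
  "bessel_I0 t = (\<Sum>n. (t / 2) ^ (2 * n) / (fact n)^2)"

end

theory Submission
  imports Defs
begin

text \<open>The Euler factor is \<open>\<Sum>\<^sub>\<nu> c\<^sub>\<nu>\<^sup>2\<close>, where \<open>c\<^sub>\<nu> = d\<^sub>k\<^sub>/\<^sub>2(p\<^sup>\<nu>) x\<^sup>\<nu>\<close> with \<open>x = p\<^sup>-\<^sup>\<sigma> \<le> 3/4\<close>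
  are the Taylor coefficients of \<open>(1 - w)\<^sup>-\<^sup>k\<^sup>/\<^sup>2\<close> at \<open>w = x e(\<theta>)\<close>, \<open>e(\<theta>) = cis (2\<pi>\<theta>)\<close>.
  By Parseval the factor is \<open>\<integral>\<^sub>0\<^sup>1 |1 - x e(\<theta>)|\<^sup>-\<^sup>k d\<theta>\<close>. Since \<open>log |1 - w| = - Re w + O(|w|\<^sup>2)\<close>,
  the integrand is \<open>exp (k x cos 2\<pi>\<theta>)\<close> up to a factor \<open>exp (\<plusminus>4 k x\<^sup>2)\<close>, and the integral of
  \<open>exp (t cos 2\<pi>\<theta>)\<close> is \<open>I\<^sub>0(t)\<close>, again by Parseval. This gives (i); (ii) follows from
  \<open>1 \<le> I\<^sub>0(t) \<le> e\<^sup>t\<close> for \<open>t \<ge> 0\<close>.\<close>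

lemma has_integral_suminf_Weierstrass:
  fixes g :: "nat \<Rightarrow> real \<Rightarrow> complex"
  assumes bound: "\<And>i x. x \<in> {a..b} \<Longrightarrow> norm (g i x) \<le> M i" and M: "summable M"
    and cont: "\<And>i. continuous_on {a..b} (g i)"
    and int: "\<And>i. (g i has_integral I i) {a..b}"
  shows "I sums integral {a..b} (\<lambda>x. \<Sum>i. g i x)"
    and "((\<lambda>x. \<Sum>i. g i x) has_integral (\<Sum>i. I i)) {a..b}"
proof -
  have unif: "uniform_limit {a..b} (\<lambda>n x. \<Sum>i<n. g i x) (\<lambda>x. \<Sum>i. g i x) sequentially"
    by (rule Weierstrass_m_test[OF bound M])
  have "continuous_on {a..b} (\<lambda>x. \<Sum>i<n. g i x)" for n
    by (intro continuous_intros cont)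
  then obtain K J where K: "\<And>n. ((\<lambda>x. \<Sum>i<n. g i x) has_integral K n) {a..b}"
    and J: "((\<lambda>x. \<Sum>i. g i x) has_integral J) {a..b}" and lim: "K \<longlonglongrightarrow> J"
    by (rule uniform_limit_integral[OF unif]) auto
  have "K = (\<lambda>n. \<Sum>i<n. I i)"
    using has_integral_unique[OF K has_integral_sum[of "{..<_}" g I, OF _ int]] by auto
  then have "I sums J" using lim unfolding sums_def by simp
  then show "I sums integral {a..b} (\<lambda>x. \<Sum>i. g i x)" using J integral_unique by metis
  then show "((\<lambda>x. \<Sum>i. g i x) has_integral (\<Sum>i. I i)) {a..b}"
    using J \<open>I sums J\<close> sums_unique by metis
qed

lemma has_integral_cis_int:
  fixes j :: int
  shows "((\<lambda>t. cis (2*pi*j*t)) has_integral (if j = 0 then 1 else 0)) {0..1}"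
proof (cases "j = 0")
  case True then show ?thesis using has_integral_const_real[of "1::complex" 0 1] by simp
next
  case False
  define A where "A = \<i> * complex_of_real (2*pi*j)"
  have "A \<noteq> 0" using False by (simp add: A_def)
  have cis_exp: "cis (2*pi*j*t) = exp (t *\<^sub>R A)" for t
    by (simp add: A_def cis_conv_exp scaleR_conv_of_real mult_ac)
  define f where "f t = exp (t *\<^sub>R A) / A" for t :: real
  have "(f has_vector_derivative cis (2*pi*j*t)) (at t within {0..1})" for t
    unfolding f_def cis_exp
    using has_vector_derivative_divide[OF exp_scaleR_has_vector_derivative_right[of A t "{0..1}"], of A]
      \<open>A \<noteq> 0\<close>
    by simp
  moreover have "f 1 - f 0 = 0"
    by (simp add: f_def A_def exp_eq_1)
  ultimately show ?thesis
    using fundamental_theorem_of_calculus[of 0 1 f "\<lambda>t. cis (2*pi*j*t)"] False by auto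
qed

lemma has_integral_fourier_coeff:
  fixes c :: "nat \<Rightarrow> real"
  assumes sc: "summable (\<lambda>n. \<bar>c n\<bar>)"
  shows "((\<lambda>t. (\<Sum>m. complex_of_real (c m) * cis (2*pi*m*t)) * cis (-(2*pi*n*t)))
           has_integral complex_of_real (c n)) {0..1}"
proof -
  define g where "g m t = complex_of_real (c m) * cis (2*pi*(int m - int n)*t)" for m t
  define I where "I m = (if m = n then complex_of_real (c m) else 0)" for m
  have "norm (g m t) \<le> \<bar>c m\<bar>" for m t
    by (simp add: g_def norm_mult)
  moreover have "continuous_on {0..1} (g m)" for m
    unfolding g_def by (intro continuous_intros)
  moreover have "(g m has_integral I m) {0..1}" for m
    using has_integral_mult_right[OF has_integral_cis_int[of "int m - int n"], of "complex_of_real (c m)"]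
    unfolding g_def I_def by (cases "m = n") simp_all
  ultimately have "((\<lambda>t. \<Sum>m. g m t) has_integral (\<Sum>m. I m)) {0..1}"
    by (rule has_integral_suminf_Weierstrass(2)[OF _ sc])
  moreover have "(\<Sum>m. I m) = complex_of_real (c n)"
    using sums_single[of n "\<lambda>m. complex_of_real (c m)"] unfolding I_def by (simp add: sums_iff)
  moreover have "(\<Sum>m. g m t) = (\<Sum>m. complex_of_real (c m) * cis (2*pi*m*t)) * cis (-(2*pi*n*t))" for t
  proof -
    have "summable (\<lambda>m. complex_of_real (c m) * cis (2*pi*m*t))"
      by (rule summable_norm_cancel, rule summable_comparison_test[OF _ sc]) (auto simp: norm_mult)
    then have "(\<Sum>m. complex_of_real (c m) * cis (2*pi*m*t)) * cis (-(2*pi*n*t))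
        = (\<Sum>m. complex_of_real (c m) * cis (2*pi*m*t) * cis (-(2*pi*n*t)))"
      by (rule suminf_mult2)
    also have "\<dots> = (\<Sum>m. g m t)"
      by (simp add: g_def mult.assoc cis_mult algebra_simps)
    finally show ?thesis by (rule sym)
  qed
  ultimately show ?thesis by simp
qed

lemma parseval_abs_summable:
  fixes c :: "nat \<Rightarrow> real"
  assumes sc: "summable (\<lambda>n. \<bar>c n\<bar>)"
  defines "F \<equiv> \<lambda>t. (\<Sum>m. complex_of_real (c m) * cis (2*pi*m*t))"
  shows "summable (\<lambda>n. (c n)^2)"
    and "((\<lambda>t. (cmod (F t))^2) has_integral (\<Sum>n. (c n)^2)) {0..1}"
proof -
  have summable_F: "summable (\<lambda>m. complex_of_real (c m) * cis (2*pi*m*t))" for t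
    by (rule summable_norm_cancel, rule summable_comparison_test[OF _ sc]) (auto simp: norm_mult)
  have F_bound: "cmod (F t) \<le> (\<Sum>n. \<bar>c n\<bar>)" for t
  proof -
    have "cmod (F t) \<le> (\<Sum>n. norm (complex_of_real (c n) * cis (2*pi*n*t)))"
      unfolding F_def
      by (rule summable_norm, rule summable_comparison_test[OF _ sc]) (auto simp: norm_mult)
    then show ?thesis by (simp add: norm_mult)
  qed
  have F_cont: "continuous_on {0..1} F"
  proof -
    have "uniform_limit {0..1} (\<lambda>n t. \<Sum>i<n. complex_of_real (c i) * cis (2*pi*i*t)) F sequentially"
      unfolding F_def by (rule Weierstrass_m_test[OF _ sc]) (simp add: norm_mult)
    then show ?thesis
      by (rule uniform_limit_theorem[rotated]) (auto intro!: always_eventually continuous_intros)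
  qed
  define g where "g n t = complex_of_real (c n) * (F t * cis (-(2*pi*n*t)))" for n t
  have int_g: "(g n has_integral complex_of_real ((c n)^2)) {0..1}" for n
    unfolding g_def F_def power2_eq_square of_real_mult
    by (rule has_integral_mult_right, rule has_integral_fourier_coeff[OF sc])
  have bound_g: "norm (g n t) \<le> \<bar>c n\<bar> * (\<Sum>n. \<bar>c n\<bar>)" for n t
    unfolding g_def norm_mult using F_bound[of t] by (simp add: mult_left_mono)
  have "continuous_on {0..1} (g n)" for n
    unfolding g_def by (intro continuous_intros F_cont)
  note Weierstrass = has_integral_suminf_Weierstrass[OF bound_g summable_mult2[OF sc] this int_g]
  have sums_int: "(\<lambda>n. complex_of_real ((c n)^2)) sums integral {0..1} (\<lambda>t. \<Sum>n. g n t)"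
    and int: "((\<lambda>t. \<Sum>n. g n t) has_integral (\<Sum>n. complex_of_real ((c n)^2))) {0..1}"
    using Weierstrass by simp_all
  have g_sum: "(\<Sum>n. g n t) = complex_of_real ((cmod (F t))^2)" for t
  proof -
    have "(\<lambda>n. cnj (complex_of_real (c n) * cis (2*pi*n*t))) sums cnj (F t)"
      using sums_cnj[THEN iffD2, OF summable_sums[OF summable_F[of t]]] unfolding F_def by simp
    then have "(\<lambda>n. F t * (complex_of_real (c n) * cis (-(2*pi*n*t)))) sums (F t * cnj (F t))"
      by (intro sums_mult) (simp add: cis_cnj)
    then have "(\<lambda>n. g n t) sums (F t * cnj (F t))"
      by (simp add: g_def mult_ac)
    then show ?thesis by (metis sums_unique complex_norm_square)
  qed
  show summable_sq: "summable (\<lambda>n. (c n)^2)"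
    using sums_int summable_of_real_iff by (metis sums_summable)
  have "((\<lambda>t. complex_of_real ((cmod (F t))^2)) has_integral complex_of_real (\<Sum>n. (c n)^2)) {0..1}"
    using int unfolding g_sum suminf_of_real[OF summable_sq] .
  from has_integral_linear[OF this bounded_linear_Re]
  show "((\<lambda>t. (cmod (F t))^2) has_integral (\<Sum>n. (c n)^2)) {0..1}" by (simp add: o_def)
qed

lemma cis_2pi_power: "cis (2*pi*t) ^ n = cis (2*pi*real n*t)"
  by (subst Complex.DeMoivre) (simp add: mult_ac)

lemma binomial_series_cis:
  fixes x z t :: real
  assumes "0 \<le> x" "x < 1"
  shows "(\<lambda>n. complex_of_real (pochhammer z n / fact n * x^n) * cis (2*pi*n*t)) sums
           ((1 - complex_of_real x * cis (2*pi*t)) powr (- complex_of_real z))"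
proof -
  have norm_lt_1: "norm (- (complex_of_real x * cis (2*pi*t))) < 1" using assms by (simp add: norm_mult)
  have "((- complex_of_real z) gchoose n) * (- (complex_of_real x * cis (2*pi*t)))^n
        = complex_of_real (pochhammer z n / fact n * x^n) * cis (2*pi*n*t)" for n
  proof -
    have gchoose: "((- complex_of_real z) gchoose n) = (-1)^n * complex_of_real (pochhammer z n) / fact n"
      by (simp add: gbinomial_pochhammer pochhammer_of_real)
    have power: "(- (complex_of_real x * cis (2*pi*t)))^n
        = (-1)^n * (complex_of_real (x^n) * cis (2*pi*n*t))"
      by (subst power_minus) (simp only: power_mult_distrib cis_2pi_power of_real_power)
    have "((-1::complex)^n * (-1)^n) = 1"
      by (simp flip: power_mult_distrib)
    then show ?thesis unfolding gchoose power by (simp add: field_simps)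
  qed
  then show ?thesis using gen_binomial_complex[OF norm_lt_1, of "- complex_of_real z"] by simp
qed

lemma exp_series_cis:
  fixes a t :: real
  shows "(\<lambda>n. complex_of_real (a^n / fact n) * cis (2*pi*n*t)) sums exp (complex_of_real a * cis (2*pi*t))"
proof -
  have "(complex_of_real a * cis (2*pi*t))^n /\<^sub>R fact n = complex_of_real (a^n / fact n) * cis (2*pi*n*t)" for n
    unfolding power_mult_distrib cis_2pi_power
    by (simp add: scaleR_conv_of_real divide_inverse mult.assoc mult.commute)
  then show ?thesis using exp_converges[of "complex_of_real a * cis (2*pi*t)"] by simp
qed

lemma ln_norm_one_minus_approx:
  fixes w :: complex
  assumes "norm w \<le> 3/4"
  shows "\<bar>ln (norm (1 - w)) + Re w\<bar> \<le> 4 * (norm w)^2"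
proof -
  have "1 - w \<noteq> 0" using assms by auto
  then have "ln (norm (1 - w)) + Re w = Re (Ln (1 - w) + w)" by simp
  also have "\<bar>\<dots>\<bar> \<le> norm (Ln (1 + (- w)) - (- w))"
    using abs_Re_le_cmod[of "Ln (1 - w) + w"] by simp
  also have "\<dots> \<le> (norm w)^2 / (1 - norm w)"
    using Ln_approx_linear[of "- w"] assms by simp
  also have "\<dots> \<le> 4 * (norm w)^2"
    using assms mult_left_mono[of 1 "4 * (1 - norm w)" "(norm w)^2"]
    by (simp add: divide_le_eq algebra_simps)
  finally show ?thesis .
qed

lemma norm_powr_one_minus_bounds:
  fixes w :: complex and k :: real
  assumes "norm w \<le> 3/4" "0 \<le> k"
  shows "exp (- (4*k*(norm w)^2)) * exp (k * Re w) \<le> (norm ((1 - w) powr (- of_real (k/2))))^2"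
    and "(norm ((1 - w) powr (- of_real (k/2))))^2 \<le> exp (4*k*(norm w)^2) * exp (k * Re w)"
proof -
  define D where "D = ln (norm (1 - w)) + Re w"
  have "1 - w \<noteq> 0" using assms by auto
  then have "(norm ((1 - w) powr (- of_real (k/2))))^2 = exp (- (k * D)) * exp (k * Re w)"
    by (simp add: norm_powr_real_powr' powr_def D_def power2_eq_square algebra_simps flip: exp_add)
  moreover have "\<bar>k * D\<bar> \<le> 4*k*(norm w)^2"
    using mult_left_mono[OF ln_norm_one_minus_approx[OF assms(1)] assms(2)] assms(2)
    by (simp add: D_def abs_mult mult.assoc)
  ultimately show "exp (- (4*k*(norm w)^2)) * exp (k * Re w) \<le> (norm ((1 - w) powr (- of_real (k/2))))^2"
    and "(norm ((1 - w) powr (- of_real (k/2))))^2 \<le> exp (4*k*(norm w)^2) * exp (k * Re w)"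
    by simp_all
qed

lemma summable_abs_exp_coeffs: "summable (\<lambda>n. \<bar>a^n / fact n\<bar> :: real)"
proof -
  have "\<bar>a^n / fact n\<bar> = inverse (fact n) * \<bar>a\<bar>^n" for n
    by (auto simp add: field_simps power_abs)
  then show ?thesis
    using summable_exp[of "\<bar>a\<bar>"] by simp
qed

lemma bessel_I0_eq_suminf_sq: "bessel_I0 t = (\<Sum>n. ((t/2)^n / fact n)^2)"
  by (simp add: bessel_I0_def power_mult power_divide power2_eq_square mult_ac)

lemma bessel_I0_has_integral:
  "((\<lambda>\<theta>. exp (t * cos (2*pi*\<theta>))) has_integral bessel_I0 t) {0..1}"
proof -
  have "((\<lambda>\<theta>. (norm (\<Sum>m. complex_of_real ((t/2)^m / fact m) * cis (2*pi*m*\<theta>)))^2)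
      has_integral (\<Sum>n. ((t/2)^n / fact n)^2)) {0..1}"
    by (rule parseval_abs_summable(2)[OF summable_abs_exp_coeffs])
  moreover have "(\<Sum>m. complex_of_real ((t/2)^m / fact m) * cis (2*pi*m*\<theta>))
      = exp (complex_of_real (t/2) * cis (2*pi*\<theta>))" for \<theta>
    by (rule sums_unique[symmetric], rule exp_series_cis)
  moreover have "(norm (exp (complex_of_real (t/2) * cis (2*pi*\<theta>))))^2 = exp (t * cos (2*pi*\<theta>))"
    for \<theta>
    by (simp add: power2_eq_square flip: exp_add)
  ultimately show ?thesis
    by (simp only: bessel_I0_eq_suminf_sq)
qed

lemma bessel_I0_ge_one: "1 \<le> bessel_I0 t"
proof -
  have "(\<Sum>n\<in>{0}. ((t/2)^n / fact n)^2) \<le> (\<Sum>n. ((t/2)^n / fact n)^2)"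
    using parseval_abs_summable(1)[OF summable_abs_exp_coeffs] by (rule sum_le_suminf) auto
  then show ?thesis by (simp add: bessel_I0_eq_suminf_sq)
qed

lemma bessel_I0_le_exp_abs: "bessel_I0 t \<le> exp \<bar>t\<bar>"
proof -
  have "\<bar>t * cos (2*pi*\<theta>)\<bar> \<le> \<bar>t\<bar>" for \<theta>
    unfolding abs_mult by (rule mult_left_le[OF abs_cos_le_one abs_ge_zero])
  then have "exp (t * cos (2*pi*\<theta>)) \<le> exp \<bar>t\<bar>" for \<theta>
    using abs_le_D1 exp_le_cancel_iff by blast
  from has_integral_le[OF bessel_I0_has_integral has_integral_const_real this]
  show ?thesis by simp
qed

lemma ex_exp_factor_bound:
  fixes S I \<delta> :: real
  assumes "0 < I" "exp (- \<delta>) * I \<le> S" "S \<le> exp \<delta> * I"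
  shows "\<exists>E. S = I * exp E \<and> \<bar>E\<bar> \<le> \<delta>"
proof
  have "0 < exp (- \<delta>) * I" using assms(1) by simp
  then have "0 < S" using assms(2) by linarith
  have "exp (- \<delta>) \<le> S / I" "S / I \<le> exp \<delta>"
    using assms by (simp_all add: field_simps)
  then have "- \<delta> \<le> ln (S / I)" "ln (S / I) \<le> \<delta>"
    using \<open>0 < S\<close> \<open>0 < I\<close> ln_ge_iff[of "S / I" "- \<delta>"] ln_le_cancel_iff[of "S / I" "exp \<delta>"]
    by simp_all
  then show "S = I * exp (ln (S / I)) \<and> \<bar>ln (S / I)\<bar> \<le> \<delta>"
    using \<open>0 < S\<close> \<open>0 < I\<close> by auto
qed

lemma suminf_sq_binomial_coeffs_approx_bessel_I0:
  fixes x k :: real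
  assumes x: "0 \<le> x" "x \<le> 3/4" and k: "0 < k"
  defines "c \<equiv> \<lambda>n. pochhammer (k/2) n / fact n * x^n"
  shows "summable (\<lambda>n. (c n)^2)"
    and "\<exists>E. (\<Sum>n. (c n)^2) = bessel_I0 (k*x) * exp E \<and> \<bar>E\<bar> \<le> 4*k*x^2"
proof -
  define F where "F \<theta> = (1 - complex_of_real x * cis (2*pi*\<theta>)) powr (- complex_of_real (k/2))" for \<theta>
  have F_sums: "(\<lambda>n. complex_of_real (c n) * cis (2*pi*n*\<theta>)) sums F \<theta>" for \<theta>
    unfolding c_def F_def by (rule binomial_series_cis) (use x in auto)
  have "summable (\<lambda>n. complex_of_real (c n))"
    using F_sums[of 0] by (simp add: sums_iff)
  moreover have "0 \<le> c n" for n
    using x k by (simp add: c_def pochhammer_nonneg)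
  ultimately have "summable (\<lambda>n. \<bar>c n\<bar>)"
    by (simp add: summable_of_real_iff)
  note parseval = parseval_abs_summable[OF this]
  show "summable (\<lambda>n. (c n)^2)"
    by (rule parseval(1))
  have S: "((\<lambda>\<theta>. (norm (F \<theta>))^2) has_integral (\<Sum>n. (c n)^2)) {0..1}"
    using parseval(2) F_sums by (simp add: sums_iff)
  define \<delta> where "\<delta> = 4*k*x^2"
  have "exp (- \<delta>) * exp (k*x * cos (2*pi*\<theta>)) \<le> (norm (F \<theta>))^2"
    and "(norm (F \<theta>))^2 \<le> exp \<delta> * exp (k*x * cos (2*pi*\<theta>))" for \<theta>
    using norm_powr_one_minus_bounds[of "complex_of_real x * cis (2*pi*\<theta>)" k] x less_imp_le[OF k]
    by (simp_all add: F_def \<delta>_def norm_mult mult.assoc)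
  then have lower: "exp (- \<delta>) * bessel_I0 (k*x) \<le> (\<Sum>n. (c n)^2)"
    and upper: "(\<Sum>n. (c n)^2) \<le> exp \<delta> * bessel_I0 (k*x)"
    by (intro has_integral_le[OF has_integral_mult_right[OF bessel_I0_has_integral] S]
        has_integral_le[OF S has_integral_mult_right[OF bessel_I0_has_integral]]; simp)+
  have "0 < bessel_I0 (k*x)"
    using bessel_I0_ge_one[of "k*x"] by linarith
  from ex_exp_factor_bound[OF this lower upper]
  show "\<exists>E. (\<Sum>n. (c n)^2) = bessel_I0 (k*x) * exp E \<and> \<bar>E\<bar> \<le> 4*k*x^2"
    unfolding \<delta>_def .
qed

lemma bessel_I0_mult_exp_eq_exp:
  assumes "0 \<le> t" "\<bar>E\<bar> \<le> \<delta>"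
  shows "\<exists>E'. bessel_I0 t * exp E = exp E' \<and> \<bar>E'\<bar> \<le> t + \<delta>"
proof
  have "0 \<le> ln (bessel_I0 t)" "ln (bessel_I0 t) \<le> t"
    using bessel_I0_ge_one[of t] bessel_I0_le_exp_abs[of t] ln_le_cancel_iff[of "bessel_I0 t" "exp t"]
      assms(1)
    by simp_all
  then have "\<bar>ln (bessel_I0 t) + E\<bar> \<le> t + \<delta>"
    using assms(2) by arith
  moreover have "bessel_I0 t * exp E = exp (ln (bessel_I0 t) + E)"
    using bessel_I0_ge_one[of t] by (simp add: exp_add)
  ultimately show "bessel_I0 t * exp E = exp (ln (bessel_I0 t) + E) \<and> \<bar>ln (bessel_I0 t) + E\<bar> \<le> t + \<delta>"
    by blast
qed

lemma gen_divisor_prime_power: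
  assumes "prime p" "0 < z"
  shows "gen_divisor z (p ^ n) = pochhammer z n / fact n"
proof (cases "n = 0")
  case True
  then show ?thesis by (simp add: gen_divisor_def)
next
  case False
  have "prime_factors (p ^ n) = {p}" using assms False by (simp add: prime_factorization_prime_power)
  moreover have "multiplicity p (p ^ n) = n" using assms by (simp add: multiplicity_prime_power)
  moreover have "z \<notin> \<int>\<^sub>\<le>\<^sub>0" using assms by (auto elim!: nonpos_Ints_cases)
  ultimately show ?thesis by (simp add: gen_divisor_def pochhammer_Gamma)
qed

lemma gen_divisor_prime_power_sq_div_powr:
  assumes "prime p" "0 < z"
  shows "(gen_divisor z (p ^ n))^2 / real p powr (2 * real n * \<sigma>)
      = (pochhammer z n / fact n * (1 / real p powr \<sigma>)^n)^2"
proof -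
  have "0 < real p" using prime_gt_0_nat[OF assms(1)] by simp
  then have "real p powr (2 * real n * \<sigma>) = (real p powr \<sigma>)^(2*n)"
    by (simp add: powr_powr mult_ac flip: powr_realpow)
  then show ?thesis
    by (simp add: gen_divisor_prime_power[OF assms] power_mult_distrib power_divide
        power_mult[symmetric] mult_ac)
qed

lemma inverse_prime_powr_le:
  assumes "prime p" "1/2 < \<sigma>"
  shows "1 / real p powr \<sigma> \<le> 3/4"
proof -
  have "sqrt 2 \<ge> 4/3"
    by (rule real_le_rsqrt) (simp add: power2_eq_square)
  also have "sqrt 2 = 2 powr (1/2)"
    by (simp add: powr_half_sqrt)
  also have "\<dots> \<le> 2 powr \<sigma>"
    using assms(2) by (intro powr_mono) auto
  also have "\<dots> \<le> real p powr \<sigma>"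
    using prime_ge_2_nat[OF assms(1)] assms(2) by (intro powr_mono2) auto
  finally have "4/3 \<le> real p powr \<sigma>" .
  then show ?thesis by (simp add: divide_le_eq)
qed

theorem lemma2p1:
  fixes \<sigma> :: real
  assumes "1/2 < \<sigma>" and "\<sigma> < 1"
  shows "\<exists>B>0. \<forall>(p::nat) (k::real). prime p \<longrightarrow> k > 0 \<longrightarrow>
    summable (\<lambda>\<nu>. (gen_divisor (k/2) (p ^ \<nu>))^2 / real p powr (2 * real \<nu> * \<sigma>)) \<and>
    (\<exists>E1. (\<Sum>\<nu>. (gen_divisor (k/2) (p ^ \<nu>))^2 / real p powr (2 * real \<nu> * \<sigma>))
            = bessel_I0 (k / real p powr \<sigma>) * exp E1
          \<and> \<bar>E1\<bar> \<le> B * k / real p powr (2 * \<sigma>)) \<and>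
    (real p \<le> k powr (1 / \<sigma>) \<longrightarrow>
      (\<exists>E2. (\<Sum>\<nu>. (gen_divisor (k/2) (p ^ \<nu>))^2 / real p powr (2 * real \<nu> * \<sigma>))
              = exp E2
            \<and> \<bar>E2\<bar> \<le> B * k / real p powr \<sigma>))"
proof (rule exI[of _ 5], intro conjI allI impI)
  fix p :: nat and k :: real
  assume p: "prime p" and k: "k > 0"
  let ?a = "\<lambda>\<nu>. (gen_divisor (k/2) (p ^ \<nu>))^2 / real p powr (2 * real \<nu> * \<sigma>)"
  define x where "x = 1 / real p powr \<sigma>"
  have x: "0 \<le> x" "x \<le> 3/4"
    using inverse_prime_powr_le[OF p assms(1)] by (simp_all add: x_def)
  have powr_x: "real p powr \<sigma> = 1 / x" "real p powr (2 * \<sigma>) = 1 / x^2"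
    using prime_gt_0_nat[OF p] by (simp_all add: x_def power2_eq_square flip: powr_add)
  have "?a = (\<lambda>\<nu>. (pochhammer (k/2) \<nu> / fact \<nu> * x^\<nu>)^2)"
    using gen_divisor_prime_power_sq_div_powr[OF p] k by (simp add: x_def)
  note euler = suminf_sq_binomial_coeffs_approx_bessel_I0[OF x k, folded this]
  show "summable ?a"
    by (rule euler(1))
  obtain E1 where E1: "suminf ?a = bessel_I0 (k*x) * exp E1" "\<bar>E1\<bar> \<le> 4*k*x^2"
    using euler(2) by blast
  then show "\<exists>E1. suminf ?a = bessel_I0 (k / real p powr \<sigma>) * exp E1
      \<and> \<bar>E1\<bar> \<le> 5 * k / real p powr (2 * \<sigma>)"
    using k by (intro exI[of _ E1]) (simp add: powr_x)
  have "k*x + 4*k*x^2 \<le> 5 * k / real p powr \<sigma>"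
    using x k by (simp add: powr_x power2_eq_square mult_left_le)
  then show "\<exists>E2. suminf ?a = exp E2 \<and> \<bar>E2\<bar> \<le> 5 * k / real p powr \<sigma>"
    using bessel_I0_mult_exp_eq_exp[of "k*x" E1 "4*k*x^2"] E1 x k by force
qed simp

end
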